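(* Let $(w_K,x_K)_{K\ge1}\subseteq\{0,1\}^{\mathbb Z}\times\{0,1\}^{\mathbb Z}$ with $w_K\le x_K$, $(w_K)$ coordinatewise non-decreasing and $(x_K)$ coordinatewise non-increasing, and let $(w,x)=(w_\infty,x_\infty)$ be the coordinatewise limit. Suppose $(w_K,x_K)$ is good: there is an increasing sequence $(N_i)$ such that for every $K\in\mathbb N\cup\{\infty\}$, $(w_K,x_K)$ is quasi-generic along $(N_i)$ (for $\sigma\times\sigma$) for some measure $\rho_K$, and $\rho_K(\{(u,v):u_0=0,v_0=1\})\to\rho_\infty(\{(u,v):u_0=0,v_0=1\})$. If for each $K\ge1$ the subshift $\overline{[w_K,x_K]}$ is a sandwich measure-theoretically subordinate subshift with base measure $\rho_K$, then both $\bigcap_{K\ge1}\overline{[w_K,x_K]}$ and $\overline{[w,x]}$ are sandwich measure-theoretically subordinate subshifts with base measure $\rho_\infty=\lim_{K\to\infty}\rho_K$.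
   Context: $\sigma$ is the left shift on $\{0,1\}^{\mathbb Z}$; $\le$ is coordinatewise; $\mathcal M(Y)$ is the set of shift-invariant Borel probability measures on $Y$. A point $p$ is quasi-generic for $\mu$ along $(N_i)$ if $\frac1{N_i}\sum_{n\le N_i}\delta_{T^np}\to\mu$ weakly. For $w\le x$, $\overline{[w,x]}$ is the closure of $\{\sigma^ny:w\le y\le x,\ n\in\mathbb Z\}$. $N(w,x,y)=(1-y)w+yx$ coordinatewise, $\pi_{1,2}$ the projection to the first two coordinates. A subshift $X$ is a sandwich measure-theoretically subordinate subshift if there is $\rho\in\mathcal M((\{0,1\}^{\mathbb Z})^2,\sigma\times\sigma)$ with $\mathcal M(X)=\{N_*(\lambda):\lambda\in\mathcal M((\{0,1\}^{\mathbb Z})^3,\sigma^{\times3}),(\pi_{1,2})_*\lambda=\rho\}$; $\rho$ is a base measure if moreover $\rho(\{(u,v):u\le v\})=1$. *)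

theory Defs
  imports "HOL-Analysis.Analysis" "HOL-Probability.Probability"
begin

text \<open>Points of the full shift: elements of {0,1}^Z, rendered as int \<Rightarrow> bool
  (True = 1, False = 0), with the product topology (bool is discrete).\<close>

type_synonym pt = "int \<Rightarrow> bool"

definition shiftn :: "int \<Rightarrow> pt \<Rightarrow> pt" where
  "shiftn k y = (\<lambda>n. y (n + k))"

definition shift :: "pt \<Rightarrow> pt" where
  "shift = shiftn 1"

definition shift2 :: "pt \<times> pt \<Rightarrow> pt \<times> pt" where
  "shift2 = map_prod shift shift"

definition shift3 :: "pt \<times> pt \<times> pt \<Rightarrow> pt \<times> pt \<times> pt" where
  "shift3 = map_prod shift (map_prod shift shift)"

definition subshift :: "pt set \<Rightarrow> bool" where
  "subshift X \<longleftrightarrow> closed X \<and> shift ` X = X"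

definition inv_prob :: "('a::topological_space \<Rightarrow> 'a) \<Rightarrow> 'a measure \<Rightarrow> bool" where
  "inv_prob T \<mu> \<longleftrightarrow> sets \<mu> = sets borel \<and> prob_space \<mu> \<and> distr \<mu> borel T = \<mu>"

text \<open>M(Y): shift-invariant Borel probability measures on Y, viewed as measures
  on the full shift giving full mass to Y.\<close>
definition Minv :: "pt set \<Rightarrow> pt measure set" where
  "Minv Y = {\<mu>. inv_prob shift \<mu> \<and> emeasure \<mu> Y = 1}"

definition quasi_generic ::
  "('a::topological_space \<Rightarrow> 'a) \<Rightarrow> 'a \<Rightarrow> (nat \<Rightarrow> nat) \<Rightarrow> 'a measure \<Rightarrow> bool" where
  "quasi_generic T p Ns \<mu> \<longleftrightarrow> sets \<mu> = sets borel \<and> prob_space \<mu> \<and>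
     (\<forall>f :: 'a \<Rightarrow> real. continuous_on UNIV f \<and> bounded (range f) \<longrightarrow>
        (\<lambda>i. (\<Sum>n<Ns i. f ((T ^^ n) p)) / real (Ns i)) \<longlonglongrightarrow> integral\<^sup>L \<mu> f)"

definition sandwich :: "pt \<Rightarrow> pt \<Rightarrow> pt set" where
  "sandwich w x = closure {shiftn k y | k y. w \<le> y \<and> y \<le> x}"

text \<open>N(w,x,y) = (1-y)w + yx coordinatewise.\<close>
definition Nmap :: "pt \<times> pt \<times> pt \<Rightarrow> pt" where
  "Nmap t = (case t of (w, x, y) \<Rightarrow> (\<lambda>n. if y n then x n else w n))"

definition pi12 :: "pt \<times> pt \<times> pt \<Rightarrow> pt \<times> pt" where
  "pi12 t = (case t of (w, x, y) \<Rightarrow> (w, x))"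

definition smt_subshift :: "pt set \<Rightarrow> (pt \<times> pt) measure \<Rightarrow> bool" where
  "smt_subshift X \<rho> \<longleftrightarrow> subshift X \<and> inv_prob shift2 \<rho> \<and>
     Minv X = {distr lam borel Nmap | lam. inv_prob shift3 lam \<and> distr lam borel pi12 = \<rho>}"

definition smt_subshift_base :: "pt set \<Rightarrow> (pt \<times> pt) measure \<Rightarrow> bool" where
  "smt_subshift_base X \<rho> \<longleftrightarrow> smt_subshift X \<rho> \<and> emeasure \<rho> {(u, v). u \<le> v} = 1"

end

(*
  Write X_K for the sandwich subshift of (w_K, x_K), and [w, x] for that of the limit pair.
  Since w_K <= w <= x <= x_K, the Birkhoff averages of a cylinder indicator along the orbits of
  (w_K, x_K) and of (w, x) differ only through window coordinates that are free (u_t = 0, v_t = 1)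
  for the outer pair but fixed for the inner one.  By shift invariance every free coordinate has the
  frequency rho{u_0 = 0, v_0 = 1}, so the hypothesis on this single cylinder yields rho_K -> rho on
  all cylinders.
  Every N-image of an invariant joining over rho lives on [w, x]: the pairs (u, v) with some N(u, v, y)
  outside [w, x] form an open set that the orbit of (w, x) never visits, hence a rho-null set.
  Conversely, a measure on the intersection of the X_K is an N-image over every rho_K; by compactness
  the representing joinings have a limit point, which is an invariant joining over rho with the same
  N-image.  As M([w, x]) is contained in M(intersection of the X_K), both sets equal the N-images over rho.
*)

theory Submission
  imports Defs "HOL-Library.Diagonal_Subsequence"
begin

section \<open>Spaces with a cylinder structure\<close>

lemma bounded_double_seq_convergent_subseq:
  fixes x :: "nat \<Rightarrow> nat \<Rightarrow> real"
  assumes bnd: "\<And>m K. \<bar>x m K\<bar> \<le> B"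
  obtains r where "strict_mono r" "\<And>m. convergent (\<lambda>K. x m (r K))"
proof -
  define P where "P m s \<longleftrightarrow> convergent (\<lambda>K. x m (s K))" for m and s :: "nat \<Rightarrow> nat"
  interpret subseqs P
  proof
    fix m and s :: "nat \<Rightarrow> nat"
    obtain f where f: "strict_mono f" "monoseq (\<lambda>n. x m (s (f n)))"
      using seq_monosub[of "\<lambda>n. x m (s n)"] by blast
    have "Bseq (\<lambda>n. x m (s (f n)))"
      using bnd by (intro BseqI'[of _ B]) auto
    then show "\<exists>r'. strict_mono r' \<and> P m (s \<circ> r')"
      using f Bseq_monoseq_convergent unfolding P_def by (auto simp: o_def)
  qed
  have "P m (diagseq \<circ> (+) (Suc m))" for m
  proof (rule diagseq_holds)
    fix r s n assume "strict_mono (r :: nat \<Rightarrow> nat)" "P n s"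
    then show "P n (s \<circ> r)"
      unfolding P_def using convergent_subseq_convergent[of "\<lambda>K. x n (s K)" r] by (simp add: o_def)
  qed
  then have "convergent (\<lambda>K. x m (diagseq (K + Suc m)))" for m
    unfolding P_def o_def add.commute[of _ "Suc m"] .
  then have "convergent (\<lambda>K. x m (diagseq K))" for m
    using convergent_ignore_initial_segment by blast
  with subseq_diagseq show ?thesis
    using that by blast
qed

text \<open>An abstract version of the cylinder sets of a full shift: \<open>agree n a b\<close> says that \<open>a\<close>
  and \<open>b\<close> coincide on the window of size \<open>n\<close>.\<close>

locale cylinder_space =
  fixes agree :: "nat \<Rightarrow> 'a::topological_space \<Rightarrow> 'a \<Rightarrow> bool"
  assumes agree_refl: "agree n a a"
    and agree_sym: "agree n a b \<Longrightarrow> agree n b a"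
    and agree_trans: "agree n a b \<Longrightarrow> agree n b c \<Longrightarrow> agree n a c"
    and agree_mono: "m \<le> n \<Longrightarrow> agree n a b \<Longrightarrow> agree m a b"
    and open_agree: "open {b. agree n a b}"
    and agree_nhds: "open U \<Longrightarrow> a \<in> U \<Longrightarrow> \<exists>n. {b. agree n a b} \<subseteq> U"
    and finite_agree_classes: "finite (range (\<lambda>a. {b. agree n a b}))"
    and compact_space_UNIV: "compact (UNIV :: 'a set)"
begin

definition determined :: "nat \<Rightarrow> 'a set \<Rightarrow> bool" where
  "determined n S \<longleftrightarrow> (\<forall>a b. agree n a b \<longrightarrow> (a \<in> S \<longleftrightarrow> b \<in> S))"

definition cylinders :: "'a set set" where
  "cylinders = {S. \<exists>n. determined n S}"

lemma cylindersI: "determined n S \<Longrightarrow> S \<in> cylinders"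
  unfolding cylinders_def by blast

lemma determined_mono: "determined m S \<Longrightarrow> m \<le> n \<Longrightarrow> determined n S"
  unfolding determined_def using agree_mono by blast

lemma determined_Compl: "determined n S \<Longrightarrow> determined n (- S)"
  unfolding determined_def by blast

lemma determined_open: "determined n S \<Longrightarrow> open S"
proof -
  assume "determined n S"
  then have "S = (\<Union>a\<in>S. {b. agree n a b})"
    using agree_refl unfolding determined_def by blast
  then show "open S"
    using open_agree by (metis open_UN)
qed

lemma cylinders_open: "S \<in> cylinders \<Longrightarrow> open S"
  unfolding cylinders_def using determined_open by blast

lemma cylinders_Compl: "S \<in> cylinders \<Longrightarrow> - S \<in> cylinders"
  unfolding cylinders_def using determined_Compl by blast

lemma cylinders_closed: "S \<in> cylinders \<Longrightarrow> closed S"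
  using cylinders_open[OF cylinders_Compl] by (simp add: closed_def)

lemma cylinders_borel: "S \<in> cylinders \<Longrightarrow> S \<in> sets borel"
  using cylinders_open by simp

lemma cylinders_Un:
  assumes "S \<in> cylinders" "T \<in> cylinders"
  shows "S \<union> T \<in> cylinders"
proof -
  obtain m n where "determined m S" "determined n T"
    using assms unfolding cylinders_def by blast
  then have "determined (max m n) S" "determined (max m n) T"
    using determined_mono by auto
  then have "determined (max m n) (S \<union> T)"
    unfolding determined_def by blast
  then show ?thesis
    by (rule cylindersI)
qed

lemma cylinders_Int: "S \<in> cylinders \<Longrightarrow> T \<in> cylinders \<Longrightarrow> S \<inter> T \<in> cylinders"
  using cylinders_Un[OF cylinders_Compl cylinders_Compl] cylinders_Compl by fastforce

lemma cylinders_UNIV: "UNIV \<in> cylinders"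
  by (rule cylindersI[of 0]) (simp add: determined_def)

lemma algebra_cylinders: "algebra UNIV cylinders"
  unfolding algebra_iff_Un
  using cylinders_UNIV cylinders_Compl cylinders_Un cylinders_Compl[OF cylinders_UNIV]
  by (auto simp: Compl_eq_Diff_UNIV[symmetric])

lemma finite_determined: "finite {S. determined n S}"
proof -
  let ?C = "range (\<lambda>a. {b. agree n a b})"
  have "S = \<Union>{c \<in> ?C. c \<subseteq> S}" if "determined n S" for S
    using that agree_refl unfolding determined_def by blast
  then have "{S. determined n S} \<subseteq> Union ` Pow ?C"
    by blast
  then show ?thesis
    using finite_agree_classes by (metis finite_Pow_iff finite_imageI finite_subset)
qed

lemma countable_cylinders: "countable cylinders"
proof -
  have "cylinders = (\<Union>n. {S. determined n S})"
    unfolding cylinders_def by blast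
  then show ?thesis
    using finite_determined by (simp add: countable_finite)
qed

lemma open_eq_UN_determined:
  fixes U :: "'a set"
  assumes "open U"
  obtains V where "\<And>n. determined n (V n)" "(\<Union>n. V n) = U"
proof
  let ?V = "\<lambda>n. {a. {b. agree n a b} \<subseteq> U}"
  show "determined n (?V n)" for n
    unfolding determined_def using agree_sym agree_trans by blast
  show "(\<Union>n. ?V n) = U"
    using agree_refl agree_nhds[OF assms] by blast
qed

lemma sets_borel_eq_sigma_cylinders: "sets borel = sigma_sets UNIV cylinders"
  unfolding sets_borel
proof (rule sigma_sets_eqI)
  fix U :: "'a set" assume "U \<in> {S. open S}"
  then obtain V where "\<And>n. determined n (V n)" "(\<Union>n. V n) = U"
    using open_eq_UN_determined by blast
  then show "U \<in> sigma_sets UNIV cylinders"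
    by (metis cylindersI sigma_sets.Basic sigma_sets.Union)
qed (use cylinders_open in auto)

lemma measure_eqI_cylinders:
  assumes "sets M = sets borel" "sets N = sets borel" "finite_measure M"
    and "\<And>S. S \<in> cylinders \<Longrightarrow> emeasure M S = emeasure N S"
  shows "M = N"
proof (rule measure_eqI_generator_eq[of cylinders UNIV _ _ "\<lambda>_. UNIV"])
  show "Int_stable cylinders"
    using cylinders_Int by (auto simp: Int_stable_def)
  show "emeasure M UNIV \<noteq> \<infinity>"
    using finite_measure.emeasure_finite[OF assms(3), of UNIV] by simp
qed (use assms cylinders_UNIV sets_borel_eq_sigma_cylinders in auto)

lemma measurable_if_vimage_cylinders:
  assumes "\<And>S. S \<in> cylinders \<Longrightarrow> f -` S \<inter> space M \<in> sets M"
  shows "f \<in> M \<rightarrow>\<^sub>M borel"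
proof -
  have "f \<in> M \<rightarrow>\<^sub>M measure_of UNIV cylinders (\<lambda>_. 0)"
    using assms by (intro measurable_measure_of) auto
  moreover have "sets (measure_of UNIV cylinders (\<lambda>_. 0)) = sets borel"
    using sets_borel_eq_sigma_cylinders by simp
  ultimately show ?thesis
    using measurable_cong_sets by blast
qed

lemma continuous_on_indicator_cylinder:
  assumes "S \<in> cylinders"
  shows "continuous_on UNIV (indicator S :: 'a \<Rightarrow> real)"
  unfolding continuous_on_open_invariant
proof (intro allI impI)
  fix B :: "real set" assume "open B"
  have "indicator S -` B = (if 1 \<in> B then S else {}) \<union> (if 0 \<in> B then - S else {})"
    by (auto simp: indicator_def of_bool_def split: if_splits)
  then have "open (indicator S -` B)"
    using cylinders_open cylinders_Compl assms by auto
  then show "\<exists>A. open A \<and> A \<inter> UNIV = indicator S -` B \<inter> UNIV"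
    by auto
qed

lemma decseq_cylinders_eventually_empty:
  assumes "range A \<subseteq> cylinders" "decseq A" "(\<Inter>i. A i) = {}"
  shows "\<exists>n. \<forall>j\<ge>n. A j = {}"
proof -
  have "open (- A i)" for i
    using assms(1) cylinders_closed by blast
  moreover have "UNIV \<subseteq> (\<Union>i. - A i)"
    using assms(3) by blast
  ultimately obtain I where "finite I" "UNIV \<subseteq> (\<Union>i\<in>I. - A i)"
    using compactE_image[OF compact_space_UNIV] by metis
  moreover obtain n where "\<forall>i\<in>I. i \<le> n"
    using \<open>finite I\<close> finite_nat_set_iff_bounded_le by blast
  ultimately have "A n = {}"
    using assms(2) unfolding decseq_def by blast
  then show ?thesis
    using assms(2) by (metis decseqD subset_empty)
qed

text \<open>Continuity at \<open>{}\<close>, which Caratheodory's theorem needs, comes for free by compactness.\<close>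

lemma caratheodory_cylinders:
  fixes f :: "'a set \<Rightarrow> real"
  assumes nonneg: "\<And>S. S \<in> cylinders \<Longrightarrow> 0 \<le> f S"
    and additive: "\<And>S T. S \<in> cylinders \<Longrightarrow> T \<in> cylinders \<Longrightarrow> S \<inter> T = {} \<Longrightarrow> f (S \<union> T) = f S + f T"
  shows "\<exists>\<mu>. (\<forall>S \<in> cylinders. \<mu> S = ennreal (f S)) \<and> measure_space UNIV (sigma_sets UNIV cylinders) \<mu>"
proof -
  have cyl_empty: "{} \<in> cylinders"
    using cylinders_Compl[OF cylinders_UNIV] by simp
  have f_empty: "f {} = 0"
    using additive[OF cyl_empty cyl_empty] by simp
  interpret algebra UNIV cylinders
    by (rule algebra_cylinders)
  show ?thesis
  proof (rule caratheodory_empty_continuous)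
    show "positive cylinders (\<lambda>S. ennreal (f S))"
      by (simp add: positive_def f_empty)
    show "additive cylinders (\<lambda>S. ennreal (f S))"
      using additive nonneg by (simp add: additive_def)
  next
    fix A :: "nat \<Rightarrow> 'a set"
    assume "range A \<subseteq> cylinders" "decseq A" "(\<Inter>i. A i) = {}"
    then obtain n where "\<forall>j\<ge>n. A j = {}"
      using decseq_cylinders_eventually_empty by blast
    then have "\<forall>\<^sub>F j in sequentially. ennreal (f (A j)) = 0"
      unfolding eventually_sequentially using f_empty by (auto intro!: exI[of _ n])
    then show "(\<lambda>j. ennreal (f (A j))) \<longlonglongrightarrow> 0"
      by (simp add: tendsto_eventually)
  qed simp
qed

lemma cylinder_content_extends:
  fixes f :: "'a set \<Rightarrow> real"
  assumes nonneg: "\<And>S. S \<in> cylinders \<Longrightarrow> 0 \<le> f S"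
    and additive: "\<And>S T. S \<in> cylinders \<Longrightarrow> T \<in> cylinders \<Longrightarrow> S \<inter> T = {} \<Longrightarrow> f (S \<union> T) = f S + f T"
    and normalized: "f UNIV = 1"
  obtains M where "prob_space M" "sets M = sets borel" "\<And>S. S \<in> cylinders \<Longrightarrow> measure M S = f S"
proof -
  have "\<exists>\<mu>. (\<forall>S \<in> cylinders. \<mu> S = ennreal (f S)) \<and> measure_space UNIV (sigma_sets UNIV cylinders) \<mu>"
    using nonneg additive by (rule caratheodory_cylinders)
  then obtain \<mu> where \<mu>: "\<forall>S \<in> cylinders. \<mu> S = ennreal (f S)"
    and ms: "measure_space UNIV (sigma_sets UNIV cylinders) \<mu>"
    by blast
  define M where "M = measure_of UNIV (sigma_sets UNIV cylinders) \<mu>"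
  have sets_M: "sets M = sets borel"
    unfolding M_def sets_borel_eq_sigma_cylinders by (simp add: sigma_sets_sigma_sets_eq)
  have emeasure_M: "emeasure M S = ennreal (f S)" if "S \<in> cylinders" for S
    using ms that \<mu> unfolding M_def
    by (subst emeasure_measure_of_sigma) (auto simp: measure_space_def)
  show ?thesis
  proof
    show "prob_space M"
      using emeasure_M[OF cylinders_UNIV] sets_eq_imp_space_eq[OF sets_M]
      by (intro prob_spaceI) (simp add: normalized)
    show "measure M S = f S" if "S \<in> cylinders" for S
      using emeasure_M[OF that] nonneg[OF that] by (simp add: measure_def)
  qed (rule sets_M)
qed

lemma convergent_subseq_cylinders:
  fixes L :: "nat \<Rightarrow> 'a measure"
  assumes L: "\<And>K. prob_space (L K)" "\<And>K. sets (L K) = sets borel"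
  obtains r M where "strict_mono r" "prob_space M" "sets M = sets borel"
    "\<And>S. S \<in> cylinders \<Longrightarrow> (\<lambda>K. measure (L (r K)) S) \<longlonglongrightarrow> measure M S"
proof -
  define e where "e = from_nat_into cylinders"
  have bound: "\<bar>measure (L K) (e m)\<bar> \<le> 1" for m K
    using prob_space.prob_le_1[OF L(1)] by simp
  obtain r where r: "strict_mono r" and conv_e: "\<And>m. convergent (\<lambda>K. measure (L (r K)) (e m))"
    using bounded_double_seq_convergent_subseq[of "\<lambda>m K. measure (L K) (e m)", OF bound] by blast
  define lf where "lf S = lim (\<lambda>K. measure (L (r K)) S)" for S
  have lim: "(\<lambda>K. measure (L (r K)) S) \<longlonglongrightarrow> lf S" if S: "S \<in> cylinders" for S
  proof -
    obtain m where "e m = S"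
      using from_nat_into_surj[OF countable_cylinders S] unfolding e_def by blast
    then show ?thesis
      using conv_e[of m] unfolding lf_def convergent_LIMSEQ_iff by simp
  qed
  obtain M where M: "prob_space M" "sets M = sets borel"
    and measure_M: "\<And>S. S \<in> cylinders \<Longrightarrow> measure M S = lf S"
  proof (rule cylinder_content_extends)
    show "0 \<le> lf S" if "S \<in> cylinders" for S
      using lim[OF that] by (rule LIMSEQ_le_const) simp
    show "lf (S \<union> T) = lf S + lf T"
      if "S \<in> cylinders" "T \<in> cylinders" "S \<inter> T = {}" for S T
    proof -
      have "measure (L (r K)) (S \<union> T) = measure (L (r K)) S + measure (L (r K)) T" for K
        using that cylinders_borel L(2) prob_space.finite_measure[OF L(1)]
        by (intro finite_measure.finite_measure_Union) auto
      then have "(\<lambda>K. measure (L (r K)) (S \<union> T)) \<longlonglongrightarrow> lf S + lf T"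
        using tendsto_add[OF lim lim] that by simp
      then show ?thesis
        using lim[OF cylinders_Un[OF that(1,2)]] LIMSEQ_unique by blast
    qed
    have "measure (L (r K)) UNIV = 1" for K
      using prob_space.prob_space[OF L(1)] sets_eq_imp_space_eq[OF L(2)] by simp
    then have "(\<lambda>K. measure (L (r K)) UNIV) \<longlonglongrightarrow> 1"
      by simp
    then show "lf UNIV = 1"
      by (rule LIMSEQ_unique[OF lim[OF cylinders_UNIV]])
  qed blast
  show ?thesis
    using that[OF r M] lim measure_M by simp
qed

end

section \<open>The full shift and its products\<close>

definition prod_agree ::
  "(nat \<Rightarrow> 'a \<Rightarrow> 'a \<Rightarrow> bool) \<Rightarrow> (nat \<Rightarrow> 'b \<Rightarrow> 'b \<Rightarrow> bool) \<Rightarrow> nat \<Rightarrow> 'a \<times> 'b \<Rightarrow> 'a \<times> 'b \<Rightarrow> bool"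
  where "prod_agree A B n p q \<longleftrightarrow> A n (fst p) (fst q) \<and> B n (snd p) (snd q)"

lemma prod_agree_class:
  "{q. prod_agree A B n p q} = {a. A n (fst p) a} \<times> {b. B n (snd p) b}"
  by (auto simp: prod_agree_def)

lemma cylinder_space_prod:
  assumes "cylinder_space A" "cylinder_space B"
  shows "cylinder_space (prod_agree A B)"
proof -
  interpret a: cylinder_space A by fact
  interpret b: cylinder_space B by fact
  show ?thesis
  proof
    fix n p
    show "prod_agree A B n p p"
      using a.agree_refl b.agree_refl by (simp add: prod_agree_def)
  next
    fix n p q
    show "prod_agree A B n p q \<Longrightarrow> prod_agree A B n q p"
      using a.agree_sym b.agree_sym by (simp add: prod_agree_def)
  next
    fix n p q r
    show "prod_agree A B n p q \<Longrightarrow> prod_agree A B n q r \<Longrightarrow> prod_agree A B n p r"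
      using a.agree_trans b.agree_trans unfolding prod_agree_def by blast
  next
    fix m n p q
    show "m \<le> n \<Longrightarrow> prod_agree A B n p q \<Longrightarrow> prod_agree A B m p q"
      using a.agree_mono b.agree_mono unfolding prod_agree_def by blast
  next
    fix n p
    show "open {q. prod_agree A B n p q}"
      unfolding prod_agree_class using a.open_agree b.open_agree by (rule open_Times)
  next
    fix U and p :: "'a \<times> 'b" assume "open U" "p \<in> U"
    then obtain S T where ST: "open S" "open T" "fst p \<in> S" "snd p \<in> T" "S \<times> T \<subseteq> U"
      by (metis open_prod_elim mem_Times_iff)
    obtain m where "{a. A m (fst p) a} \<subseteq> S"
      using a.agree_nhds[OF ST(1,3)] by blast
    moreover obtain n where "{b. B n (snd p) b} \<subseteq> T"
      using b.agree_nhds[OF ST(2,4)] by blast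
    ultimately have "{q. prod_agree A B (max m n) p q} \<subseteq> U"
      using a.agree_mono[of m "max m n"] b.agree_mono[of n "max m n"] ST(5)
      by (fastforce simp: prod_agree_def)
    then show "\<exists>n. {q. prod_agree A B n p q} \<subseteq> U" ..
  next
    fix n
    have "range (\<lambda>p. {q. prod_agree A B n p q})
        \<subseteq> (\<lambda>(X, Y). X \<times> Y) ` (range (\<lambda>a. {b. A n a b}) \<times> range (\<lambda>a. {b. B n a b}))"
      unfolding prod_agree_class by auto
    then show "finite (range (\<lambda>p. {q. prod_agree A B n p q}))"
      by (rule finite_subset)
        (intro finite_imageI finite_cartesian_product a.finite_agree_classes b.finite_agree_classes)
  next
    show "compact (UNIV :: ('a \<times> 'b) set)"
      using compact_Times[OF a.compact_space_UNIV b.compact_space_UNIV] by simp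
  qed
qed

definition window_agree :: "nat \<Rightarrow> pt \<Rightarrow> pt \<Rightarrow> bool" where
  "window_agree n a b \<longleftrightarrow> (\<forall>j. \<bar>j\<bar> \<le> int n \<longrightarrow> a j = b j)"

lemma finite_window: "finite {j::int. \<bar>j\<bar> \<le> int n}"
  by (rule finite_subset[of _ "{- int n..int n}"]) auto

lemma compact_UNIV_pt: "compact (UNIV :: pt set)"
proof -
  have "compact_space (product_topology (\<lambda>i::int. (euclidean :: bool topology)) UNIV)"
    unfolding compact_space_product_topology
    by (auto simp: compact_space_def intro: finite_imp_compact)
  then show ?thesis
    by (simp add: euclidean_product_topology compact_space_def)
qed

lemma window_agree_nhds:
  assumes "open U" "a \<in> U"
  shows "\<exists>n. {b. window_agree n a b} \<subseteq> U"
proof -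
  have "openin (product_topology (\<lambda>i. euclidean) UNIV) U"
    using assms(1) unfolding open_fun_def .
  from product_topology_open_contains_basis[OF this assms(2)]
  obtain X where X: "a \<in> (\<Pi>\<^sub>E i\<in>UNIV. X i)" "finite {i. X i \<noteq> UNIV}" "(\<Pi>\<^sub>E i\<in>UNIV. X i) \<subseteq> U"
    by auto
  obtain k where k: "abs ` {i. X i \<noteq> UNIV} \<subseteq> {..k}"
    using X(2) finite_int_iff_bounded_le by blast
  have "b \<in> (\<Pi>\<^sub>E i\<in>UNIV. X i)" if "window_agree (nat k) a b" for b
  proof -
    have "b i \<in> X i" for i
    proof (cases "X i = UNIV")
      case False
      then have "\<bar>i\<bar> \<le> k"
        using k by blast
      then have "\<bar>i\<bar> \<le> int (nat k)"
        by linarith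
      then have "b i = a i"
        using that by (simp add: window_agree_def)
      then show ?thesis
        using X(1) unfolding PiE_UNIV_domain by auto
    qed simp
    then show ?thesis
      unfolding PiE_UNIV_domain by blast
  qed
  then show ?thesis
    using X(3) by blast
qed

interpretation cyl1: cylinder_space window_agree
proof
  fix n and a :: pt
  have "open {f. \<forall>i\<in>{j. \<bar>j\<bar> \<le> int n}. f (id i) \<in> {a i}}"
    by (rule product_topology_basis') (auto simp: finite_window intro: discrete_topology_class.open_discrete)
  moreover have "{f. \<forall>i\<in>{j. \<bar>j\<bar> \<le> int n}. f (id i) \<in> {a i}} = {b. window_agree n a b}"
    by (auto simp: window_agree_def)
  ultimately show "open {b. window_agree n a b}"
    by simp
next
  fix U and a :: pt
  show "open U \<Longrightarrow> a \<in> U \<Longrightarrow> \<exists>n. {b. window_agree n a b} \<subseteq> U"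
    by (rule window_agree_nhds)
next
  fix n
  let ?W = "{j::int. \<bar>j\<bar> \<le> int n}"
  have "range (\<lambda>a. {b. window_agree n a b}) \<subseteq> (\<lambda>h. {b. \<forall>j\<in>?W. b j = h j}) ` (\<Pi>\<^sub>E j\<in>?W. UNIV)"
  proof
    fix Z assume "Z \<in> range (\<lambda>a. {b. window_agree n a b})"
    then obtain a where "Z = {b. \<forall>j\<in>?W. b j = restrict a ?W j}"
      by (auto simp: window_agree_def)
    then show "Z \<in> (\<lambda>h. {b. \<forall>j\<in>?W. b j = h j}) ` (\<Pi>\<^sub>E j\<in>?W. UNIV)"
      by (intro image_eqI[of _ _ "restrict a ?W"]) auto
  qed
  then show "finite (range (\<lambda>a. {b. window_agree n a b}))"
    by (rule finite_subset) (intro finite_imageI finite_PiE finite_window, simp_all)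
next
  show "compact (UNIV :: pt set)"
    by (rule compact_UNIV_pt)
qed (auto simp: window_agree_def)

abbreviation "window_agree2 \<equiv> prod_agree window_agree window_agree"
abbreviation "window_agree3 \<equiv> prod_agree window_agree window_agree2"

interpretation cyl2: cylinder_space window_agree2
  by (intro cylinder_space_prod cyl1.cylinder_space_axioms)

interpretation cyl3: cylinder_space window_agree3
  by (intro cylinder_space_prod cyl1.cylinder_space_axioms cyl2.cylinder_space_axioms)

lemma vimage_cylinders:
  assumes "cylinder_space A" "cylinder_space B"
    and agree: "\<And>n x y. B (n + c) x y \<Longrightarrow> A n (f x) (f y)"
    and "S \<in> cylinder_space.cylinders A"
  shows "f -` S \<in> cylinder_space.cylinders B"
proof -
  interpret a: cylinder_space A by fact
  interpret b: cylinder_space B by fact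
  obtain n where "a.determined n S"
    using assms(4) unfolding a.cylinders_def by blast
  then have "b.determined (n + c) (f -` S)"
    using agree unfolding a.determined_def b.determined_def by blast
  then show ?thesis
    by (rule b.cylindersI)
qed

lemma borel_measurable_if_vimage_cylinders:
  assumes "cylinder_space A" "cylinder_space B"
    and "\<And>S. S \<in> cylinder_space.cylinders A \<Longrightarrow> f -` S \<in> cylinder_space.cylinders B"
  shows "f \<in> borel \<rightarrow>\<^sub>M borel"
proof -
  interpret a: cylinder_space A by fact
  interpret b: cylinder_space B by fact
  show ?thesis
    using assms(3) b.cylinders_borel by (intro a.measurable_if_vimage_cylinders) simp
qed

lemma shiftn_shiftn: "shiftn j (shiftn k y) = shiftn (k + j) y"
  by (simp add: shiftn_def ac_simps)

lemma shiftn_0 [simp]: "shiftn 0 y = y"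
  by (simp add: shiftn_def)

lemma shiftn_mono: "a \<le> b \<Longrightarrow> shiftn k a \<le> shiftn k b"
  by (simp add: le_fun_def shiftn_def)

lemma shift2_funpow: "(shift2 ^^ k) (u, v) = (shiftn (int k) u, shiftn (int k) v)"
  by (induction k) (simp_all add: shift2_def shift_def shiftn_shiftn add.commute)

lemma window_agree_shiftn:
  "window_agree (n + nat \<bar>k\<bar>) x y \<Longrightarrow> window_agree n (shiftn k x) (shiftn k y)"
  unfolding window_agree_def shiftn_def by force

lemma shift_vimage_cylinder: "S \<in> cyl1.cylinders \<Longrightarrow> shift -` S \<in> cyl1.cylinders"
  by (rule vimage_cylinders[OF cyl1.cylinder_space_axioms cyl1.cylinder_space_axioms, where c=1])
    (simp_all add: shift_def window_agree_shiftn[of _ 1, simplified])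

lemma shift2_vimage_cylinder: "S \<in> cyl2.cylinders \<Longrightarrow> shift2 -` S \<in> cyl2.cylinders"
  by (rule vimage_cylinders[OF cyl2.cylinder_space_axioms cyl2.cylinder_space_axioms, where c=1])
    (simp_all add: shift2_def shift_def prod_agree_def window_agree_shiftn[of _ 1, simplified])

lemma shift3_vimage_cylinder: "S \<in> cyl3.cylinders \<Longrightarrow> shift3 -` S \<in> cyl3.cylinders"
  by (rule vimage_cylinders[OF cyl3.cylinder_space_axioms cyl3.cylinder_space_axioms, where c=1])
    (simp_all add: shift3_def shift_def prod_agree_def window_agree_shiftn[of _ 1, simplified])

lemma pi12_vimage_cylinder: "S \<in> cyl2.cylinders \<Longrightarrow> pi12 -` S \<in> cyl3.cylinders"
  by (rule vimage_cylinders[OF cyl2.cylinder_space_axioms cyl3.cylinder_space_axioms, where c=0])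
    (auto simp: pi12_def prod_agree_def split: prod.splits)

lemma Nmap_vimage_cylinder: "S \<in> cyl1.cylinders \<Longrightarrow> Nmap -` S \<in> cyl3.cylinders"
  by (rule vimage_cylinders[OF cyl1.cylinder_space_axioms cyl3.cylinder_space_axioms, where c=0])
    (auto simp: Nmap_def prod_agree_def window_agree_def split: prod.splits)

lemma measurable_shift: "shift \<in> borel \<rightarrow>\<^sub>M borel"
  by (intro borel_measurable_if_vimage_cylinders[OF cyl1.cylinder_space_axioms
        cyl1.cylinder_space_axioms] shift_vimage_cylinder)

lemma measurable_shift3: "shift3 \<in> borel \<rightarrow>\<^sub>M borel"
  by (intro borel_measurable_if_vimage_cylinders[OF cyl3.cylinder_space_axioms
        cyl3.cylinder_space_axioms] shift3_vimage_cylinder)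

lemma measurable_pi12: "pi12 \<in> borel \<rightarrow>\<^sub>M borel"
  by (intro borel_measurable_if_vimage_cylinders[OF cyl2.cylinder_space_axioms
        cyl3.cylinder_space_axioms] pi12_vimage_cylinder)

lemma measurable_Nmap: "Nmap \<in> borel \<rightarrow>\<^sub>M borel"
  by (intro borel_measurable_if_vimage_cylinders[OF cyl1.cylinder_space_axioms
        cyl3.cylinder_space_axioms] Nmap_vimage_cylinder)

section \<open>Sandwich subshifts\<close>

lemma continuous_on_shiftn: "continuous_on UNIV (shiftn k)"
  unfolding shiftn_def
  by (intro continuous_on_coordinatewise_then_product continuous_on_product_coordinates)

lemma shift_image_eq_vimage: "shift ` X = shiftn (- 1) -` X"
proof -
  have "shift (shiftn (- 1) z) = z" "shiftn (- 1) (shift z) = z" for z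
    by (simp_all add: shift_def shiftn_shiftn)
  then show ?thesis
    by (metis (no_types, lifting) image_iff subsetI subset_antisym vimageE vimageI)
qed

lemma shiftn_image_sandwich: "shiftn j ` sandwich w x \<subseteq> sandwich w x"
  unfolding sandwich_def
proof (rule image_closure_subset)
  show "continuous_on (closure {shiftn k y |k y. w \<le> y \<and> y \<le> x}) (shiftn j)"
    using continuous_on_shiftn continuous_on_subset by blast
  show "shiftn j ` {shiftn k y |k y. w \<le> y \<and> y \<le> x} \<subseteq> closure {shiftn k y |k y. w \<le> y \<and> y \<le> x}"
    using closure_subset by (fastforce simp: shiftn_shiftn)
qed simp

lemma subshift_sandwich: "subshift (sandwich w x)"
  unfolding subshift_def shift_image_eq_vimage
proof
  show "closed (sandwich w x)"
    by (simp add: sandwich_def)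
  show "shiftn (- 1) -` sandwich w x = sandwich w x"
  proof
    show "shiftn (- 1) -` sandwich w x \<subseteq> sandwich w x"
    proof
      fix z assume "z \<in> shiftn (- 1) -` sandwich w x"
      then have "shiftn 1 (shiftn (- 1) z) \<in> sandwich w x"
        using shiftn_image_sandwich[of 1 w x] by blast
      then show "z \<in> sandwich w x"
        by (simp add: shiftn_shiftn)
    qed
    show "sandwich w x \<subseteq> shiftn (- 1) -` sandwich w x"
      using shiftn_image_sandwich[of "- 1" w x] by blast
  qed
qed

lemma subshift_INT:
  assumes "\<And>K. K \<in> I \<Longrightarrow> subshift (X K)"
  shows "subshift (\<Inter>K\<in>I. X K)"
proof -
  have "closed (X K)" "shiftn (- 1) -` X K = X K" if "K \<in> I" for K
    using assms[OF that] unfolding subshift_def shift_image_eq_vimage by auto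
  then show ?thesis
    unfolding subshift_def shift_image_eq_vimage vimage_INT by (simp add: closed_INT)
qed

lemma sandwich_mono: "w' \<le> w \<Longrightarrow> x \<le> x' \<Longrightarrow> sandwich w x \<subseteq> sandwich w' x'"
  unfolding sandwich_def by (rule closure_mono) (blast intro: order_trans)

lemma sandwich_borel: "sandwich w x \<in> sets borel"
  unfolding sandwich_def by (rule borel_closed) simp

section \<open>Quasi-generic points\<close>

definition birkhoff_avg :: "('a \<Rightarrow> 'a) \<Rightarrow> ('a \<Rightarrow> real) \<Rightarrow> nat \<Rightarrow> 'a \<Rightarrow> real" where
  "birkhoff_avg T f N p = (\<Sum>n<N. f ((T ^^ n) p)) / real N"

lemma abs_birkhoff_avg_diff_le:
  fixes f :: "'a \<Rightarrow> real" and g :: "'b \<Rightarrow> 'a \<Rightarrow> real"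
  assumes "\<And>n. \<bar>f ((T ^^ n) q) - f ((T ^^ n) p)\<bar> \<le> (\<Sum>t\<in>W. g t ((T ^^ n) q) - g t ((T ^^ n) p))"
  shows "\<bar>birkhoff_avg T f N q - birkhoff_avg T f N p\<bar>
    \<le> (\<Sum>t\<in>W. birkhoff_avg T (g t) N q - birkhoff_avg T (g t) N p)"
proof -
  have "\<bar>birkhoff_avg T f N q - birkhoff_avg T f N p\<bar>
      = \<bar>\<Sum>n<N. f ((T ^^ n) q) - f ((T ^^ n) p)\<bar> / real N"
    by (simp add: birkhoff_avg_def sum_subtractf diff_divide_distrib[symmetric])
  also have "\<dots> \<le> (\<Sum>n<N. \<bar>f ((T ^^ n) q) - f ((T ^^ n) p)\<bar>) / real N"
    by (simp add: divide_right_mono)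
  also have "\<dots> \<le> (\<Sum>n<N. \<Sum>t\<in>W. g t ((T ^^ n) q) - g t ((T ^^ n) p)) / real N"
    by (simp add: divide_right_mono sum_mono assms)
  also have "\<dots> = (\<Sum>t\<in>W. birkhoff_avg T (g t) N q - birkhoff_avg T (g t) N p)"
    by (simp add: birkhoff_avg_def sum.swap[of _ W] sum_divide_distrib sum_subtractf diff_divide_distrib)
  finally show ?thesis .
qed

lemma birkhoff_avg_vimage_diff:
  "birkhoff_avg T (f \<circ> T) N p - birkhoff_avg T f N p = (f ((T ^^ N) p) - f p) / real N"
proof -
  have "(\<Sum>n<N. f (T ((T ^^ n) p))) - (\<Sum>n<N. f ((T ^^ n) p)) = f ((T ^^ N) p) - f p"
    using sum_lessThan_telescope[of "\<lambda>n. f ((T ^^ n) p)" N] by (simp add: sum_subtractf)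
  then show ?thesis
    by (simp add: birkhoff_avg_def diff_divide_distrib[symmetric])
qed

lemma quasi_genericD:
  assumes "quasi_generic T p Ns \<rho>"
  shows "prob_space \<rho>" "sets \<rho> = sets borel" "space \<rho> = UNIV"
    and "continuous_on UNIV f \<Longrightarrow> bounded (range f) \<Longrightarrow>
      (\<lambda>i. birkhoff_avg T f (Ns i) p) \<longlonglongrightarrow> integral\<^sup>L \<rho> f"
  using assms sets_eq_imp_space_eq[of \<rho> borel]
  unfolding quasi_generic_def birkhoff_avg_def by auto

context cylinder_space
begin

lemma birkhoff_avg_indicator_tendsto:
  assumes "quasi_generic T p Ns \<rho>" "S \<in> cylinders"
  shows "(\<lambda>i. birkhoff_avg T (indicator S) (Ns i) p) \<longlonglongrightarrow> measure \<rho> S"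
proof -
  have "bounded (range (indicator S :: 'a \<Rightarrow> real))"
    by (rule bounded_subset[of "{0, 1}"]) (auto simp: indicator_def)
  then show ?thesis
    using quasi_genericD(3)[OF assms(1)]
      quasi_genericD(4)[OF assms(1) continuous_on_indicator_cylinder[OF assms(2)]] by simp
qed

lemma quasi_generic_measure_eq_0:
  assumes "quasi_generic T p Ns \<rho>" "S \<in> cylinders" "\<And>n. (T ^^ n) p \<notin> S"
  shows "measure \<rho> S = 0"
proof -
  have "(\<lambda>i. birkhoff_avg T (indicator S) (Ns i) p) = (\<lambda>i. 0)"
    using assms(3) by (simp add: birkhoff_avg_def)
  then show ?thesis
    using birkhoff_avg_indicator_tendsto[OF assms(1,2)] LIMSEQ_const_iff by metis
qed

lemma quasi_generic_open_null:
  fixes U :: "'a set"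
  assumes "quasi_generic T p Ns \<rho>" "open U" "\<And>n. (T ^^ n) p \<notin> U"
  shows "U \<in> null_sets \<rho>"
proof -
  obtain V where V: "\<And>n. determined n (V n)" "(\<Union>n. V n) = U"
    using open_eq_UN_determined[OF assms(2)] by blast
  have "V n \<in> null_sets \<rho>" for n
  proof -
    have "V n \<in> cylinders"
      using V(1) by (rule cylindersI)
    moreover have "measure \<rho> (V n) = 0"
      using quasi_generic_measure_eq_0[OF assms(1) \<open>V n \<in> cylinders\<close>] assms(3) V(2) by blast
    ultimately show ?thesis
      using quasi_genericD(1,2)[OF assms(1)] cylinders_borel
      by (simp add: finite_measure.emeasure_eq_measure prob_space.finite_measure null_sets_def)
  qed
  then have "(\<Union>n. V n) \<in> null_sets \<rho>"
    by (rule null_sets_UN)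
  then show ?thesis
    using V(2) by simp
qed

lemma quasi_generic_measure_vimage:
  assumes qg: "quasi_generic T p Ns \<rho>" and Ns: "strict_mono Ns"
    and S: "S \<in> cylinders" "T -` S \<in> cylinders"
  shows "measure \<rho> (T -` S) = measure \<rho> S"
proof -
  let ?A = "\<lambda>f i. birkhoff_avg T f (Ns i) p"
  have "(\<lambda>i. ?A (indicator (T -` S)) i - ?A (indicator S) i) \<longlonglongrightarrow> measure \<rho> (T -` S) - measure \<rho> S"
    by (intro tendsto_diff birkhoff_avg_indicator_tendsto qg S)
  moreover have "(\<lambda>i. ?A (indicator (T -` S)) i - ?A (indicator S) i) \<longlonglongrightarrow> 0"
  proof (rule Lim_null_comparison)
    have "\<bar>indicator S ((T ^^ N) p) - indicator S p\<bar> \<le> (1 :: real)" for N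
      by (simp add: indicator_def)
    then have "\<bar>?A (indicator (T -` S)) i - ?A (indicator S) i\<bar> \<le> 1 / real (Ns i)" for i
      using birkhoff_avg_vimage_diff[of T "indicator S" "Ns i" p]
      by (simp add: indicator_vimage[symmetric] o_def divide_right_mono)
    then show "\<forall>\<^sub>F i in sequentially. norm (?A (indicator (T -` S)) i - ?A (indicator S) i) \<le> 1 / real (Ns i)"
      by simp
    show "(\<lambda>i. 1 / real (Ns i)) \<longlonglongrightarrow> 0"
      using LIMSEQ_subseq_LIMSEQ[OF lim_inverse_n Ns] by (simp add: o_def inverse_eq_divide)
  qed
  ultimately show ?thesis
    using LIMSEQ_unique by fastforce
qed

lemma quasi_generic_inv_prob:
  assumes qg: "quasi_generic T p Ns \<rho>" and Ns: "strict_mono Ns"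
    and T: "\<And>S. S \<in> cylinders \<Longrightarrow> T -` S \<in> cylinders"
  shows "inv_prob T \<rho>"
proof -
  note \<rho> = quasi_genericD(1-3)[OF qg]
  have T_meas: "T \<in> \<rho> \<rightarrow>\<^sub>M borel"
    using T cylinders_borel \<rho>(2,3) by (intro measurable_if_vimage_cylinders) simp
  have "distr \<rho> borel T = \<rho>"
  proof (rule measure_eqI_cylinders)
    show "finite_measure (distr \<rho> borel T)"
      by (intro prob_space.finite_measure prob_space.prob_space_distr \<rho>(1) T_meas)
    fix S assume "S \<in> cylinders"
    then show "emeasure (distr \<rho> borel T) S = emeasure \<rho> S"
      using quasi_generic_measure_vimage[OF qg Ns] T \<rho> cylinders_borel
      by (simp add: emeasure_distr[OF T_meas] finite_measure.emeasure_eq_measure prob_space.finite_measure)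
  qed (simp_all add: \<rho>)
  then show ?thesis
    unfolding inv_prob_def using \<rho> by simp
qed

end

section \<open>Convergence of the base measures\<close>

lemma pair_coordinate_cylinder: "{(u, v). P (u j) (v j)} \<in> cyl2.cylinders"
  by (rule cyl2.cylindersI[of "nat \<bar>j\<bar>"])
    (auto simp: cyl2.determined_def prod_agree_def window_agree_def)

lemma emeasure_eq_1_if_Compl_null:
  assumes "prob_space M" "space M = UNIV" "- A \<in> null_sets M"
  shows "emeasure M A = 1"
proof -
  have "A \<in> sets M"
    using sets.compl_sets[OF null_setsD2[OF assms(3)]] assms(2) by simp
  moreover have "AE z in M. z \<in> A"
    using assms(3) by (rule AE_I') auto
  ultimately show ?thesis
    by (rule prob_space.emeasure_eq_1_AE[OF assms(1)])
qed

lemma quasi_generic_emeasure_ordered_pairs: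
  assumes qg: "quasi_generic shift2 (w, x) Ns \<rho>" and "w \<le> x"
  shows "emeasure \<rho> {(u, v). u \<le> v} = 1"
proof -
  note \<rho> = quasi_genericD(1-3)[OF qg]
  let ?B = "\<lambda>j. {(u :: pt, v :: pt). u j \<and> \<not> v j}"
  have null: "?B j \<in> null_sets \<rho>" for j
  proof -
    have "measure \<rho> (?B j) = 0"
      using \<open>w \<le> x\<close>
      by (intro cyl2.quasi_generic_measure_eq_0[OF qg pair_coordinate_cylinder])
        (auto simp: shift2_funpow shiftn_def le_fun_def)
    moreover have "?B j \<in> sets \<rho>"
      unfolding \<rho>(2) by (rule cyl2.cylinders_borel[OF pair_coordinate_cylinder])
    ultimately show ?thesis
      using \<rho>(1) by (simp add: finite_measure.emeasure_eq_measure prob_space.finite_measure null_sets_def)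
  qed
  have "- {(u, v). u \<le> v} = (\<Union>j. ?B j)"
    by (auto simp: le_fun_def)
  also have "\<dots> \<in> null_sets \<rho>"
    using null by (rule null_sets_UN)
  finally show ?thesis
    using \<rho>(1,3) by (intro emeasure_eq_1_if_Compl_null)
qed

definition free_at :: "int \<Rightarrow> (pt \<times> pt) set" where
  "free_at t = {(u, v). \<not> u t \<and> v t}"

lemma free_at_cylinder: "free_at t \<in> cyl2.cylinders"
  unfolding free_at_def by (rule pair_coordinate_cylinder)

lemma quasi_generic_measure_free_at:
  assumes qg: "quasi_generic shift2 p Ns \<rho>" and Ns: "strict_mono Ns"
  shows "measure \<rho> (free_at t) = measure \<rho> (free_at 0)"
proof -
  have "shift2 -` free_at t = free_at (t + 1)" for t
    by (auto simp: free_at_def shift2_def shift_def shiftn_def add.commute)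
  moreover have "measure \<rho> (shift2 -` free_at t) = measure \<rho> (free_at t)" for t
    by (rule cyl2.quasi_generic_measure_vimage[OF qg Ns free_at_cylinder
          shift2_vimage_cylinder[OF free_at_cylinder]])
  ultimately have step: "measure \<rho> (free_at (t + 1)) = measure \<rho> (free_at t)" for t
    by metis
  show ?thesis
  proof (induction t rule: int_induct[where k = 0])
    case (step1 i)
    then show ?case using step[of i] by simp
  next
    case (step2 i)
    then show ?case using step[of "i - 1"] by simp
  qed simp
qed

text \<open>A cylinder in window \<open>n\<close> can only distinguish \<open>(u', v')\<close> from a narrower sandwich \<open>(u, v)\<close>
  at a coordinate of the window that is free for \<open>(u', v')\<close> but not for \<open>(u, v)\<close>.\<close>

lemma indicator_diff_le_free_at:
  fixes u' u v v' :: pt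
  assumes le: "u' \<le> u" "v \<le> v'" "u \<le> v" and S: "cyl2.determined n S"
  shows "\<bar>indicator S (u', v') - indicator S (u, v) :: real\<bar>
    \<le> (\<Sum>t\<in>{j. \<bar>j\<bar> \<le> int n}. indicator (free_at t) (u', v') - indicator (free_at t) (u, v))"
proof -
  have nonneg: "0 \<le> indicator (free_at t) (u', v') - (indicator (free_at t) (u, v) :: real)" for t
    using le by (auto simp: free_at_def indicator_def le_fun_def)
  show ?thesis
  proof (cases "window_agree2 n (u', v') (u, v)")
    case True
    then have "indicator S (u', v') = (indicator S (u, v) :: real)"
      using S unfolding cyl2.determined_def by (simp add: indicator_def)
    then show ?thesis
      using sum_nonneg[OF nonneg] by simp
  next
    case False
    then obtain t where t: "\<bar>t\<bar> \<le> int n" "u' t \<noteq> u t \<or> v' t \<noteq> v t"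
      unfolding prod_agree_def window_agree_def by auto
    then have "indicator (free_at t) (u', v') - indicator (free_at t) (u, v) = (1 :: real)"
      using le by (auto simp: free_at_def le_fun_def indicator_def)
    moreover have "indicator (free_at t) (u', v') - indicator (free_at t) (u, v)
        \<le> (\<Sum>t\<in>{j. \<bar>j\<bar> \<le> int n}. indicator (free_at t) (u', v') - (indicator (free_at t) (u, v) :: real))"
      by (rule member_le_sum) (use t(1) nonneg finite_window in auto)
    moreover have "\<bar>indicator S (u', v') - indicator S (u, v) :: real\<bar> \<le> 1"
      by (simp add: indicator_def)
    ultimately show ?thesis
      by linarith
  qed
qed

lemma measure_diff_le_free_at:
  assumes qg': "quasi_generic shift2 (w', x') Ns \<rho>'" and qg: "quasi_generic shift2 (w, x) Ns \<rho>"
    and Ns: "strict_mono Ns" and le: "w' \<le> w" "x \<le> x'" "w \<le> x"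
    and S: "cyl2.determined n S"
  shows "\<bar>measure \<rho>' S - measure \<rho> S\<bar>
    \<le> real (card {j::int. \<bar>j\<bar> \<le> int n}) * (measure \<rho>' (free_at 0) - measure \<rho> (free_at 0))"
proof -
  let ?W = "{j::int. \<bar>j\<bar> \<le> int n}"
  let ?A = "\<lambda>f p i. birkhoff_avg shift2 f (Ns i) p"
  have S_cyl: "S \<in> cyl2.cylinders"
    using S by (rule cyl2.cylindersI)
  have bound: "\<bar>?A (indicator S) (w', x') i - ?A (indicator S) (w, x) i\<bar>
      \<le> (\<Sum>t\<in>?W. ?A (indicator (free_at t)) (w', x') i - ?A (indicator (free_at t)) (w, x) i)" for i
    using le by (intro abs_birkhoff_avg_diff_le)
      (auto simp: shift2_funpow intro!: indicator_diff_le_free_at shiftn_mono S)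
  have lhs: "(\<lambda>i. \<bar>?A (indicator S) (w', x') i - ?A (indicator S) (w, x) i\<bar>)
      \<longlonglongrightarrow> \<bar>measure \<rho>' S - measure \<rho> S\<bar>"
    by (intro tendsto_intros cyl2.birkhoff_avg_indicator_tendsto qg qg' S_cyl)
  have rhs: "(\<lambda>i. \<Sum>t\<in>?W. ?A (indicator (free_at t)) (w', x') i - ?A (indicator (free_at t)) (w, x) i)
      \<longlonglongrightarrow> (\<Sum>t\<in>?W. measure \<rho>' (free_at t) - measure \<rho> (free_at t))"
    by (intro tendsto_intros cyl2.birkhoff_avg_indicator_tendsto qg qg' free_at_cylinder)
  have "\<bar>measure \<rho>' S - measure \<rho> S\<bar> \<le> (\<Sum>t\<in>?W. measure \<rho>' (free_at t) - measure \<rho> (free_at t))"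
    using LIMSEQ_le[OF lhs rhs] bound by blast
  also have "\<dots> = (\<Sum>t\<in>?W. measure \<rho>' (free_at 0) - measure \<rho> (free_at 0))"
    using quasi_generic_measure_free_at[OF qg' Ns] quasi_generic_measure_free_at[OF qg Ns]
    by (intro sum.cong refl arg_cong2[where f = "(-)"])
  also have "\<dots> = real (card ?W) * (measure \<rho>' (free_at 0) - measure \<rho> (free_at 0))"
    by simp
  finally show ?thesis .
qed

lemma sandwich_limit_bounds:
  fixes w x :: "nat \<Rightarrow> pt"
  assumes le: "\<And>K. K \<ge> 1 \<Longrightarrow> w K \<le> x K"
    and w_mono: "\<And>K L. 1 \<le> K \<Longrightarrow> K \<le> L \<Longrightarrow> w K \<le> w L"
    and x_anti: "\<And>K L. 1 \<le> K \<Longrightarrow> K \<le> L \<Longrightarrow> x L \<le> x K"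
    and w_lim: "\<And>n. (\<lambda>K. w K n) \<longlonglongrightarrow> winf n"
    and x_lim: "\<And>n. (\<lambda>K. x K n) \<longlonglongrightarrow> xinf n"
  shows "\<And>K. K \<ge> 1 \<Longrightarrow> w K \<le> winf" "\<And>K. K \<ge> 1 \<Longrightarrow> xinf \<le> x K" "winf \<le> xinf"
proof -
  show "w K \<le> winf" if "K \<ge> 1" for K
    using w_mono[OF that] by (intro le_funI LIMSEQ_le_const[OF w_lim]) (auto simp: le_fun_def)
  show "xinf \<le> x K" if "K \<ge> 1" for K
    using x_anti[OF that] by (intro le_funI LIMSEQ_le_const2[OF x_lim]) (auto simp: le_fun_def)
  show "winf \<le> xinf"
    using le by (intro le_funI LIMSEQ_le[OF w_lim x_lim]) (auto simp: le_fun_def)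
qed

lemma measure_tendsto_cylinders:
  fixes w x :: "nat \<Rightarrow> pt" and \<rho> :: "nat \<Rightarrow> (pt \<times> pt) measure"
  assumes wle: "\<And>K. K \<ge> 1 \<Longrightarrow> w K \<le> winf" and xle: "\<And>K. K \<ge> 1 \<Longrightarrow> xinf \<le> x K"
    and wx: "winf \<le> xinf" and Ns: "strict_mono Ns"
    and qg: "\<And>K. K \<ge> 1 \<Longrightarrow> quasi_generic shift2 (w K, x K) Ns (\<rho> K)"
    and qg_inf: "quasi_generic shift2 (winf, xinf) Ns \<rho>inf"
    and free: "(\<lambda>K. measure (\<rho> K) (free_at 0)) \<longlonglongrightarrow> measure \<rho>inf (free_at 0)"
    and S: "S \<in> cyl2.cylinders"
  shows "(\<lambda>K. measure (\<rho> K) S) \<longlonglongrightarrow> measure \<rho>inf S"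
proof -
  obtain n where n: "cyl2.determined n S"
    using S unfolding cyl2.cylinders_def by blast
  let ?c = "real (card {j::int. \<bar>j\<bar> \<le> int n})"
  have "(\<lambda>K. measure (\<rho> K) S - measure \<rho>inf S) \<longlonglongrightarrow> 0"
  proof (rule Lim_null_comparison)
    show "\<forall>\<^sub>F K in sequentially.
        norm (measure (\<rho> K) S - measure \<rho>inf S) \<le> ?c * (measure (\<rho> K) (free_at 0) - measure \<rho>inf (free_at 0))"
      using eventually_ge_at_top[of 1]
      by eventually_elim (simp add: measure_diff_le_free_at[OF qg qg_inf Ns wle xle wx n])
    show "(\<lambda>K. ?c * (measure (\<rho> K) (free_at 0) - measure \<rho>inf (free_at 0))) \<longlonglongrightarrow> 0"
      using tendsto_mult_right_zero[OF LIM_zero[OF free]] .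
  qed
  then show ?thesis
    by (rule LIM_zero_cancel)
qed

section \<open>Images of joinings under N\<close>

definition Nmap_pushforwards :: "(pt \<times> pt) measure \<Rightarrow> pt measure set" where
  "Nmap_pushforwards \<rho> = {distr lam borel Nmap | lam. inv_prob shift3 lam \<and> distr lam borel pi12 = \<rho>}"

lemma smt_subshift_base_iff:
  "smt_subshift_base X \<rho> \<longleftrightarrow>
    subshift X \<and> inv_prob shift2 \<rho> \<and> Minv X = Nmap_pushforwards \<rho> \<and> emeasure \<rho> {(u, v). u \<le> v} = 1"
  by (simp add: smt_subshift_base_def smt_subshift_def Nmap_pushforwards_def)

lemma Minv_mono: "A \<subseteq> B \<Longrightarrow> B \<in> sets borel \<Longrightarrow> Minv A \<subseteq> Minv B"
proof
  fix \<mu> assume "A \<subseteq> B" "B \<in> sets borel" "\<mu> \<in> Minv A"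
  then have "prob_space \<mu>" "sets \<mu> = sets borel" "emeasure \<mu> A = 1" "inv_prob shift \<mu>"
    unfolding Minv_def inv_prob_def by auto
  then have "emeasure \<mu> B = 1"
    using emeasure_mono[OF \<open>A \<subseteq> B\<close>] \<open>B \<in> sets borel\<close> prob_space.emeasure_le_1
    by (metis antisym)
  then show "\<mu> \<in> Minv B"
    using \<open>inv_prob shift \<mu>\<close> unfolding Minv_def by simp
qed

lemma Nmap_shift3: "Nmap \<circ> shift3 = shift \<circ> Nmap"
  by (auto simp: Nmap_def shift3_def shift_def shiftn_def fun_eq_iff split: prod.splits)

lemma inv_prob_distr_Nmap:
  assumes "inv_prob shift3 lam"
  shows "inv_prob shift (distr lam borel Nmap)"
proof -
  have lam: "sets lam = sets borel" "prob_space lam" "distr lam borel shift3 = lam"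
    using assms unfolding inv_prob_def by auto
  have Nmap_lam: "Nmap \<in> lam \<rightarrow>\<^sub>M borel" and shift3_lam: "shift3 \<in> lam \<rightarrow>\<^sub>M borel"
    by (subst measurable_cong_sets[OF lam(1) refl], rule measurable_Nmap measurable_shift3)+
  have "distr (distr lam borel Nmap) borel shift = distr lam borel (shift \<circ> Nmap)"
    by (rule distr_distr[OF measurable_shift Nmap_lam])
  also have "\<dots> = distr (distr lam borel shift3) borel Nmap"
    unfolding Nmap_shift3[symmetric] by (rule distr_distr[OF measurable_Nmap shift3_lam, symmetric])
  finally show ?thesis
    using lam prob_space.prob_space_distr[OF lam(2) Nmap_lam] unfolding inv_prob_def by simp
qed

lemma open_Nmap_section:
  assumes "open U"
  shows "open {(u, v). \<exists>y. Nmap (u, v, y) \<in> U}"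
proof -
  have "continuous_on UNIV (\<lambda>p. Nmap (fst p, snd p, y))" for y
  proof (rule continuous_on_coordinatewise_then_product)
    fix i
    have "continuous_on UNIV (\<lambda>p :: pt \<times> pt. fst p i)" "continuous_on UNIV (\<lambda>p :: pt \<times> pt. snd p i)"
      by (rule continuous_on_compose2[OF continuous_on_product_coordinates], intro continuous_intros, simp)+
    then show "continuous_on UNIV (\<lambda>p. Nmap (fst p, snd p, y) i)"
      by (cases "y i") (simp_all add: Nmap_def)
  qed
  then have "open ((\<lambda>p. Nmap (fst p, snd p, y)) -` U)" for y
    using assms by (simp add: continuous_on_open_vimage[of UNIV])
  then have "open (\<Union>y. (\<lambda>p. Nmap (fst p, snd p, y)) -` U)"
    by (intro open_UN ballI)
  moreover have "(\<Union>y. (\<lambda>p. Nmap (fst p, snd p, y)) -` U) = {(u, v). \<exists>y. Nmap (u, v, y) \<in> U}"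
    by auto
  ultimately show ?thesis
    by simp
qed

lemma Nmap_shiftn_mem_sandwich:
  assumes "w \<le> x"
  shows "Nmap (shiftn k w, shiftn k x, y) \<in> sandwich w x"
proof -
  let ?z = "Nmap (w, x, shiftn (- k) y)"
  have "w \<le> ?z" "?z \<le> x"
    using assms by (auto simp: Nmap_def le_fun_def)
  moreover have "Nmap (shiftn k w, shiftn k x, y) = shiftn k ?z"
    by (simp add: Nmap_def shiftn_def)
  ultimately show ?thesis
    unfolding sandwich_def by (blast intro: closure_subset[THEN subsetD])
qed

lemma Nmap_pushforwards_subset_Minv_sandwich:
  assumes qg: "quasi_generic shift2 (w, x) Ns \<rho>" and "w \<le> x"
  shows "Nmap_pushforwards \<rho> \<subseteq> Minv (sandwich w x)"
proof
  fix \<mu> assume "\<mu> \<in> Nmap_pushforwards \<rho>"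
  then obtain lam where \<mu>: "\<mu> = distr lam borel Nmap" and lam: "inv_prob shift3 lam" "distr lam borel pi12 = \<rho>"
    unfolding Nmap_pushforwards_def by blast
  have lam_sets: "sets lam = sets borel" "space lam = UNIV" and "prob_space lam"
    using lam(1) sets_eq_imp_space_eq[of lam borel] unfolding inv_prob_def by auto
  have pi12_lam: "pi12 \<in> lam \<rightarrow>\<^sub>M borel" and Nmap_lam: "Nmap \<in> lam \<rightarrow>\<^sub>M borel"
    by (subst measurable_cong_sets[OF lam_sets(1) refl], rule measurable_pi12 measurable_Nmap)+
  let ?D = "{(u, v). \<exists>y. Nmap (u, v, y) \<in> - sandwich w x}"
  have "?D \<in> null_sets \<rho>"
  proof (rule cyl2.quasi_generic_open_null[OF qg])
    show "open ?D"
      unfolding sandwich_def by (intro open_Nmap_section open_Compl closed_closure)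
    show "(shift2 ^^ n) (w, x) \<notin> ?D" for n
      using Nmap_shiftn_mem_sandwich[OF \<open>w \<le> x\<close>] by (simp add: shift2_funpow)
  qed
  then have "pi12 -` ?D \<in> null_sets lam"
    using null_sets_distr_iff[OF pi12_lam] lam(2) lam_sets(2) by auto
  then have "Nmap -` (- sandwich w x) \<in> null_sets lam"
    by (rule null_sets_subset)
      (use measurable_sets[OF Nmap_lam, of "- sandwich w x"] sandwich_borel lam_sets in
        \<open>auto simp: pi12_def\<close>)
  then have "- sandwich w x \<in> null_sets \<mu>"
    unfolding \<mu> using null_sets_distr_iff[OF Nmap_lam] sandwich_borel lam_sets(2) by auto
  then have "emeasure \<mu> (sandwich w x) = 1"
    using prob_space.prob_space_distr[OF \<open>prob_space lam\<close> Nmap_lam] \<mu>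
    by (intro emeasure_eq_1_if_Compl_null) simp_all
  then show "\<mu> \<in> Minv (sandwich w x)"
    unfolding Minv_def \<mu> using inv_prob_distr_Nmap[OF lam(1)] by simp
qed

lemma measure_distr_borel:
  assumes "sets M = sets borel" "f \<in> borel \<rightarrow>\<^sub>M borel" "S \<in> sets borel"
  shows "measure (distr M borel f) S = measure M (f -` S)"
  using assms measure_distr[of f M borel S] sets_eq_imp_space_eq[OF assms(1)]
  by (simp add: measurable_cong_sets[OF assms(1) refl])

lemma distr_eq_if_cylinder_limits:
  assumes A: "cylinder_space A" and B: "cylinder_space B"
    and f: "\<And>S. S \<in> cylinder_space.cylinders A \<Longrightarrow> f -` S \<in> cylinder_space.cylinders B"
    and M: "prob_space M" "sets M = sets borel" and N: "prob_space N" "sets N = sets borel"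
    and L: "\<And>K. sets (L K) = sets borel"
    and LM: "\<And>S. S \<in> cylinder_space.cylinders B \<Longrightarrow> (\<lambda>K. measure (L K) S) \<longlonglongrightarrow> measure M S"
    and LN: "\<And>S. S \<in> cylinder_space.cylinders A \<Longrightarrow>
      (\<lambda>K. measure (distr (L K) borel f) S) \<longlonglongrightarrow> measure N S"
  shows "distr M borel f = N"
proof -
  interpret a: cylinder_space A by fact
  interpret b: cylinder_space B by fact
  have f_borel: "f \<in> borel \<rightarrow>\<^sub>M borel"
    by (rule borel_measurable_if_vimage_cylinders[OF A B f])
  then have f_meas: "f \<in> M \<rightarrow>\<^sub>M borel"
    by (subst measurable_cong_sets[OF M(2) refl])
  show ?thesis
  proof (rule a.measure_eqI_cylinders)
    show "finite_measure (distr M borel f)"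
      by (intro prob_space.finite_measure prob_space.prob_space_distr M(1) f_meas)
    fix S assume S: "S \<in> a.cylinders"
    have "(\<lambda>K. measure (L K) (f -` S)) \<longlonglongrightarrow> measure N S"
      using LN[OF S] measure_distr_borel[OF L f_borel a.cylinders_borel[OF S]] by simp
    then have "measure M (f -` S) = measure N S"
      using LIMSEQ_unique[OF LM[OF f[OF S]]] by blast
    moreover have "emeasure (distr M borel f) S = emeasure M (f -` S)"
      using emeasure_distr[OF f_meas a.cylinders_borel[OF S]] sets_eq_imp_space_eq[OF M(2)] by simp
    ultimately show "emeasure (distr M borel f) S = emeasure N S"
      using finite_measure.emeasure_eq_measure[OF prob_space.finite_measure[OF M(1)]]
        finite_measure.emeasure_eq_measure[OF prob_space.finite_measure[OF N(1)]] by metis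
  qed (simp_all add: N)
qed

lemma Nmap_pushforwards_closed:
  fixes \<rho> :: "nat \<Rightarrow> (pt \<times> pt) measure"
  assumes \<mu>: "\<And>K. \<mu> \<in> Nmap_pushforwards (\<rho> K)"
    and \<rho>inf: "prob_space \<rho>inf" "sets \<rho>inf = sets borel"
    and conv: "\<And>S. S \<in> cyl2.cylinders \<Longrightarrow> (\<lambda>K. measure (\<rho> K) S) \<longlonglongrightarrow> measure \<rho>inf S"
  shows "\<mu> \<in> Nmap_pushforwards \<rho>inf"
proof -
  have "\<forall>K. \<exists>lam. distr lam borel Nmap = \<mu> \<and> inv_prob shift3 lam \<and> distr lam borel pi12 = \<rho> K"
    using \<mu> unfolding Nmap_pushforwards_def by blast
  then obtain L where L: "\<And>K. distr (L K) borel Nmap = \<mu>" "\<And>K. inv_prob shift3 (L K)"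
      "\<And>K. distr (L K) borel pi12 = \<rho> K"
    by metis
  have L_prob: "\<And>K. prob_space (L K)" and L_sets: "\<And>K. sets (L K) = sets borel"
    and L_inv: "\<And>K. distr (L K) borel shift3 = L K"
    using L(2) unfolding inv_prob_def by simp_all
  obtain r M where r: "strict_mono r" and M: "prob_space M" "sets M = sets borel"
    and LM: "\<And>S. S \<in> cyl3.cylinders \<Longrightarrow> (\<lambda>K. measure (L (r K)) S) \<longlonglongrightarrow> measure M S"
    using cyl3.convergent_subseq_cylinders[of L, OF L_prob L_sets] by blast
  have \<mu>_prob: "prob_space \<mu>" "sets \<mu> = sets borel"
    using inv_prob_distr_Nmap[OF L(2)] unfolding L(1) inv_prob_def by simp_all
  have "distr M borel shift3 = M"
  proof (rule distr_eq_if_cylinder_limits[where L = "\<lambda>K. L (r K)", OF cyl3.cylinder_space_axioms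
        cyl3.cylinder_space_axioms shift3_vimage_cylinder M M L_sets LM])
    show "(\<lambda>K. measure (distr (L (r K)) borel shift3) S) \<longlonglongrightarrow> measure M S" if "S \<in> cyl3.cylinders" for S
      using LM[OF that] by (simp add: L_inv)
  qed
  moreover have "distr M borel pi12 = \<rho>inf"
  proof (rule distr_eq_if_cylinder_limits[where L = "\<lambda>K. L (r K)", OF cyl2.cylinder_space_axioms
        cyl3.cylinder_space_axioms pi12_vimage_cylinder M \<rho>inf L_sets LM])
    show "(\<lambda>K. measure (distr (L (r K)) borel pi12) S) \<longlonglongrightarrow> measure \<rho>inf S" if "S \<in> cyl2.cylinders" for S
      using LIMSEQ_subseq_LIMSEQ[OF conv[OF that] r] by (simp add: L(3) o_def)
  qed
  moreover have "distr M borel Nmap = \<mu>"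
  proof (rule distr_eq_if_cylinder_limits[where L = "\<lambda>K. L (r K)", OF cyl1.cylinder_space_axioms
        cyl3.cylinder_space_axioms Nmap_vimage_cylinder M \<mu>_prob L_sets LM])
    show "(\<lambda>K. measure (distr (L (r K)) borel Nmap) S) \<longlonglongrightarrow> measure \<mu> S" for S
      by (simp add: L(1))
  qed
  ultimately show ?thesis
    unfolding Nmap_pushforwards_def inv_prob_def using M by auto
qed

lemma Minv_INT_subset_Nmap_pushforwards:
  fixes w x :: "nat \<Rightarrow> pt" and \<rho> :: "nat \<Rightarrow> (pt \<times> pt) measure"
  assumes smt: "\<And>K. K \<ge> 1 \<Longrightarrow> smt_subshift_base (sandwich (w K) (x K)) (\<rho> K)"
    and \<rho>inf: "prob_space \<rho>inf" "sets \<rho>inf = sets borel"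
    and conv: "\<And>S. S \<in> cyl2.cylinders \<Longrightarrow> (\<lambda>K. measure (\<rho> K) S) \<longlonglongrightarrow> measure \<rho>inf S"
  shows "Minv (\<Inter>K\<in>{1..}. sandwich (w K) (x K)) \<subseteq> Nmap_pushforwards \<rho>inf"
proof
  fix \<mu> assume \<mu>: "\<mu> \<in> Minv (\<Inter>K\<in>{1..}. sandwich (w K) (x K))"
  have "(\<Inter>K\<in>{1..}. sandwich (w K) (x K)) \<subseteq> sandwich (w (Suc K)) (x (Suc K))" for K
    by (rule INT_lower) simp
  then have \<mu>K: "\<mu> \<in> Minv (sandwich (w (Suc K)) (x (Suc K)))" for K
    using \<mu> Minv_mono[OF _ sandwich_borel] by blast
  have "\<mu> \<in> Nmap_pushforwards (\<rho> (Suc K))" for K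
    using \<mu>K[of K] smt[of "Suc K"] by (simp add: smt_subshift_base_iff)
  moreover have "(\<lambda>K. measure (\<rho> (Suc K)) S) \<longlonglongrightarrow> measure \<rho>inf S" if "S \<in> cyl2.cylinders" for S
    using conv[OF that] by (rule LIMSEQ_Suc)
  ultimately show "\<mu> \<in> Nmap_pushforwards \<rho>inf"
    by (rule Nmap_pushforwards_closed[OF _ \<rho>inf])
qed

theorem proposition4p9:
  fixes w x :: "nat \<Rightarrow> pt" and winf xinf :: pt
    and \<rho> :: "nat \<Rightarrow> (pt \<times> pt) measure" and \<rho>inf :: "(pt \<times> pt) measure"
    and Ns :: "nat \<Rightarrow> nat"
  assumes le: "\<And>K. K \<ge> 1 \<Longrightarrow> w K \<le> x K"
    and w_mono: "\<And>K L. 1 \<le> K \<Longrightarrow> K \<le> L \<Longrightarrow> w K \<le> w L"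
    and x_anti: "\<And>K L. 1 \<le> K \<Longrightarrow> K \<le> L \<Longrightarrow> x L \<le> x K"
    and w_lim: "\<And>n. (\<lambda>K. w K n) \<longlonglongrightarrow> winf n"
    and x_lim: "\<And>n. (\<lambda>K. x K n) \<longlonglongrightarrow> xinf n"
    and Ns_mono: "strict_mono Ns"
    and qg: "\<And>K. K \<ge> 1 \<Longrightarrow> quasi_generic shift2 (w K, x K) Ns (\<rho> K)"
    and qg_inf: "quasi_generic shift2 (winf, xinf) Ns \<rho>inf"
    and cyl: "(\<lambda>K. measure (\<rho> K) {(u, v). \<not> u 0 \<and> v 0}) \<longlonglongrightarrow>
               measure \<rho>inf {(u, v). \<not> u 0 \<and> v 0}"
    and smt: "\<And>K. K \<ge> 1 \<Longrightarrow> smt_subshift_base (sandwich (w K) (x K)) (\<rho> K)"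
  shows "smt_subshift_base (\<Inter>K\<in>{1..}. sandwich (w K) (x K)) \<rho>inf
       \<and> smt_subshift_base (sandwich winf xinf) \<rho>inf"
proof -
  note bounds = sandwich_limit_bounds[OF le w_mono x_anti w_lim x_lim]
  let ?X = "\<Inter>K\<in>{1..}. sandwich (w K) (x K)"
  have subshift_X: "subshift ?X"
    by (intro subshift_INT subshift_sandwich)
  have "Minv ?X \<subseteq> Nmap_pushforwards \<rho>inf"
    by (rule Minv_INT_subset_Nmap_pushforwards[OF smt quasi_genericD(1,2)[OF qg_inf]
          measure_tendsto_cylinders[OF bounds Ns_mono qg qg_inf cyl[folded free_at_def]]])
  moreover have "Minv (sandwich winf xinf) \<subseteq> Minv ?X"
    using subshift_X
    by (intro Minv_mono INT_greatest sandwich_mono borel_closed) (simp_all add: bounds(1,2) subshift_def)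
  moreover have "Nmap_pushforwards \<rho>inf \<subseteq> Minv (sandwich winf xinf)"
    by (rule Nmap_pushforwards_subset_Minv_sandwich[OF qg_inf bounds(3)])
  ultimately have "Minv ?X = Nmap_pushforwards \<rho>inf" "Minv (sandwich winf xinf) = Nmap_pushforwards \<rho>inf"
    by (meson order_trans subset_antisym)+
  then show ?thesis
    using subshift_X subshift_sandwich cyl2.quasi_generic_inv_prob[OF qg_inf Ns_mono shift2_vimage_cylinder]
      quasi_generic_emeasure_ordered_pairs[OF qg_inf bounds(3)]
    by (simp add: smt_subshift_base_iff)
qed

end
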